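(* Let $\{R_k\},\{T_k\},\{a_k\},\{s_k\}$ be nonnegative sequences with $R_{k+1}+T_{k+1}\le R_k+(1+a_k)T_k+s_k$ for all $k\ge0$, $R_0,T_0<\infty$, $\sum_{k=0}^\infty s_k<\infty$, and $a_k=\hat\rho\rho_k$ for all $k$, where $\hat\rho\ge0$ and $\{\rho_k\}$ is nonnegative with $\sum_{k=0}^\infty\rho_k<\infty$ and $\sum_{k=0}^\infty k\rho_k<\infty$. Then there exists $\hat\rho_0>0$ (depending on $R_0,T_0,\{s_k\},\{\rho_k\}$) such that whenever $\hat\rho\in[0,\hat\rho_0]$ the sequence $\{R_k\}$ is bounded. *)

theory Defs
  imports "HOL-Analysis.Analysis"
begin

end

theory Submission
  imports Defs
begin

text \<open>With \<open>V k = R k + T k\<close> the hypothesis gives \<open>V (k+1) \<le> (1 + a k) V k + s k\<close>, and unrolling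
  this with \<open>1 + x \<le> exp x\<close> bounds \<open>V\<close>, hence \<open>R\<close>, by \<open>(V 0 + \<Sum>s) exp (\<Sum>a)\<close>. This is finite for
  every \<open>\<rho>h \<ge> 0\<close> since \<open>\<Sum>a = \<rho>h \<Sum>\<rho>\<close>.\<close>

lemma discrete_gronwall:
  fixes V s a :: "nat \<Rightarrow> real"
  assumes V_nonneg: "\<And>k. V k \<ge> 0" and s_nonneg: "\<And>k. s k \<ge> 0" and a_nonneg: "\<And>k. a k \<ge> 0"
    and step: "\<And>k. V (Suc k) \<le> (1 + a k) * V k + s k"
  shows "V n \<le> (V 0 + (\<Sum>j<n. s j)) * exp (\<Sum>j<n. a j)"
proof (induction n)
  case 0
  then show ?case by simp
next
  case (Suc n)
  have exp_ge_1: "1 \<le> exp (\<Sum>j<Suc n. a j)"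
    using a_nonneg by (simp add: sum_nonneg)
  have "V (Suc n) \<le> (1 + a n) * V n + s n" by (rule step)
  also have "\<dots> \<le> exp (a n) * ((V 0 + (\<Sum>j<n. s j)) * exp (\<Sum>j<n. a j)) + s n"
    using Suc.IH exp_ge_add_one_self[of "a n"] V_nonneg[of n] a_nonneg[of n]
    by (intro add_right_mono mult_mono) auto
  also have "\<dots> = (V 0 + (\<Sum>j<n. s j)) * exp (\<Sum>j<Suc n. a j) + s n"
    by (simp add: exp_add mult_ac)
  also have "\<dots> \<le> (V 0 + (\<Sum>j<n. s j)) * exp (\<Sum>j<Suc n. a j) + s n * exp (\<Sum>j<Suc n. a j)"
    using mult_left_mono[OF exp_ge_1 s_nonneg[of n]] by simp
  also have "\<dots> = (V 0 + (\<Sum>j<Suc n. s j)) * exp (\<Sum>j<Suc n. a j)"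
    by (simp add: algebra_simps)
  finally show ?case .
qed

lemma discrete_gronwall_summable:
  fixes V s a :: "nat \<Rightarrow> real"
  assumes V_nonneg: "\<And>k. V k \<ge> 0" and s_nonneg: "\<And>k. s k \<ge> 0" and a_nonneg: "\<And>k. a k \<ge> 0"
    and "summable s" and "summable a"
    and step: "\<And>k. V (Suc k) \<le> (1 + a k) * V k + s k"
  shows "V n \<le> (V 0 + suminf s) * exp (suminf a)"
proof -
  have "(\<Sum>j<n. s j) \<le> suminf s" "(\<Sum>j<n. a j) \<le> suminf a"
    using assms by (simp_all add: sum_le_suminf)
  moreover have "0 \<le> V 0 + (\<Sum>j<n. s j)"
    using V_nonneg[of 0] s_nonneg by (simp add: sum_nonneg)
  ultimately have "(V 0 + (\<Sum>j<n. s j)) * exp (\<Sum>j<n. a j) \<le> (V 0 + suminf s) * exp (suminf a)"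
    by (intro mult_mono) auto
  with discrete_gronwall[of V s a n, OF V_nonneg s_nonneg a_nonneg step] show ?thesis
    by (rule order_trans)
qed

theorem mainTheorem20:
  fixes R0 T0 :: real and s \<rho> :: "nat \<Rightarrow> real"
  assumes "R0 \<ge> 0" and "T0 \<ge> 0"
    and "\<And>k. s k \<ge> 0" and "summable s"
    and "\<And>k. \<rho> k \<ge> 0" and "summable \<rho>"
    and "summable (\<lambda>k. real k * \<rho> k)"
  shows "\<exists>\<rho>0 > 0. \<forall>\<rho>h \<in> {0..\<rho>0}. \<forall>R T a :: nat \<Rightarrow> real.
           R 0 = R0 \<and> T 0 = T0 \<and>
           (\<forall>k. R k \<ge> 0 \<and> T k \<ge> 0 \<and> a k \<ge> 0) \<and>
           (\<forall>k. a k = \<rho>h * \<rho> k) \<and>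
           (\<forall>k. R (Suc k) + T (Suc k) \<le> R k + (1 + a k) * T k + s k)
           \<longrightarrow> Bseq R"
proof (intro exI[of _ 1] conjI ballI allI impI)
  fix \<rho>h :: real and R T a :: "nat \<Rightarrow> real"
  assume "R 0 = R0 \<and> T 0 = T0 \<and> (\<forall>k. R k \<ge> 0 \<and> T k \<ge> 0 \<and> a k \<ge> 0) \<and>
    (\<forall>k. a k = \<rho>h * \<rho> k) \<and> (\<forall>k. R (Suc k) + T (Suc k) \<le> R k + (1 + a k) * T k + s k)"
  then have nonneg: "\<And>k. R k \<ge> 0 \<and> T k \<ge> 0 \<and> a k \<ge> 0"
    and a_eq: "a = (\<lambda>k. \<rho>h * \<rho> k)"
    and RT_step: "\<And>k. R (Suc k) + T (Suc k) \<le> R k + (1 + a k) * T k + s k"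
    by auto
  have "summable a"
    unfolding a_eq using \<open>summable \<rho>\<close> by (rule summable_mult)
  have "R (Suc k) + T (Suc k) \<le> (1 + a k) * (R k + T k) + s k" for k
  proof -
    have "R k \<le> (1 + a k) * R k"
      using mult_nonneg_nonneg[of "a k" "R k"] nonneg[of k] by (simp add: algebra_simps)
    with RT_step[of k] show ?thesis by (simp add: algebra_simps)
  qed
  then have RT_bound: "R n + T n \<le> (R 0 + T 0 + suminf s) * exp (suminf a)" for n
    using discrete_gronwall_summable[of "\<lambda>k. R k + T k" s a] nonneg assms(3,4) \<open>summable a\<close>
    by (simp add: add_nonneg_nonneg)
  show "Bseq R"
  proof (rule BseqI')
    show "norm (R n) \<le> (R 0 + T 0 + suminf s) * exp (suminf a)" for n
      using RT_bound[of n] nonneg[of n] by simp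
  qed
qed simp

end
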